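(* Let $H$, $L$ be as in the context and let $k$ be a positive integer. If there is a feasible solution $(S,\mathcal T_0)$ with $d(S,\mathcal T_0)\ge k$, then $L\ge L_{LB}$, where $L_{LB}$ is the smallest positive divisor of $Z$ satisfying $L_{LB}\ge k\cdot\omega(H)$.
   Context: Notation: $[n)=\{0,1,\dots,n-1\}$. Let $M,N,Z$ be positive integers and let $H$ be a binary $MZ\times NZ$ matrix made of $M\times N$ blocks, each a $Z\times Z$ circulant; assume $H$ has no zero row and no two identical rows. For $\mathcal A\subseteq[MZ)$, $H_{\mathcal A}$ is the submatrix of rows indexed by $\mathcal A$; $\omega(A)$ is the maximum Hamming weight of a column of $A$ ($\omega$ of the empty matrix is $0$). For $i\in[MZ)$ and integer $s$, $\pi^s(i)=Z\lfloor i/Z\rfloor+((i+s)\bmod Z)$ and $\pi^s(\mathcal T)=\{\pi^s(x):x\in\mathcal T\}$. Fix an integer $L>1$. A pair $(S,\mathcal T_0)$ ($S$ a positive integer, $\mathcal T_0\subseteq[MZ)$) is a feasible solution if, with $\mathcal T_l=\pi^{lS}(\mathcal T_0)$ for $l\in[L)$, the sets $\mathcal T_0,\dots,\mathcal T_{L-1}$ are pairwise disjoint with union $[MZ)$. The layer distance $d(S,\mathcal T_0)$ is the largest $l\in[L)$ such that the vertical stack of $H_{\mathcal T_0},\dots,H_{\mathcal T_{l-1}}$ has maximum column weight at most $1$. *)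

theory Defs
  imports Main
begin

text \<open>A binary MZ x NZ matrix is modelled as H :: nat => nat => bool, with
  rows r < M*Z and columns c < N*Z (values outside are irrelevant).\<close>

definition pi_shift :: "nat \<Rightarrow> nat \<Rightarrow> nat \<Rightarrow> nat" where
  "pi_shift Z s i = Z * (i div Z) + (i + s) mod Z"

text \<open>Each Z x Z block is circulant: shifting row and column index by one
  cyclically inside their blocks does not change the entry.\<close>
definition qc_matrix :: "nat \<Rightarrow> nat \<Rightarrow> nat \<Rightarrow> (nat \<Rightarrow> nat \<Rightarrow> bool) \<Rightarrow> bool" where
  "qc_matrix M N Z H \<longleftrightarrow>
     (\<forall>r < M*Z. \<forall>c < N*Z. H r c = H (pi_shift Z 1 r) (pi_shift Z 1 c))"

definition no_zero_row :: "nat \<Rightarrow> nat \<Rightarrow> nat \<Rightarrow> (nat \<Rightarrow> nat \<Rightarrow> bool) \<Rightarrow> bool" where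
  "no_zero_row M N Z H \<longleftrightarrow> (\<forall>r < M*Z. \<exists>c < N*Z. H r c)"

definition distinct_rows :: "nat \<Rightarrow> nat \<Rightarrow> nat \<Rightarrow> (nat \<Rightarrow> nat \<Rightarrow> bool) \<Rightarrow> bool" where
  "distinct_rows M N Z H \<longleftrightarrow>
     (\<forall>r < M*Z. \<forall>r' < M*Z. r \<noteq> r' \<longrightarrow> (\<exists>c < N*Z. H r c \<noteq> H r' c))"

definition omega :: "(nat \<Rightarrow> nat \<Rightarrow> bool) \<Rightarrow> nat set \<Rightarrow> nat \<Rightarrow> nat" where
  "omega H A n = Max ({0} \<union> (\<lambda>c. card {r \<in> A. H r c}) ` {..<n})"

definition layer :: "nat \<Rightarrow> nat \<Rightarrow> nat set \<Rightarrow> nat \<Rightarrow> nat set" where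
  "layer Z S T0 l = pi_shift Z (l * S) ` T0"

definition feasible :: "nat \<Rightarrow> nat \<Rightarrow> nat \<Rightarrow> nat \<Rightarrow> nat set \<Rightarrow> bool" where
  "feasible M Z L S T0 \<longleftrightarrow> S > 0 \<and> T0 \<subseteq> {..<M*Z} \<and>
     (\<forall>l < L. \<forall>l' < L. l \<noteq> l' \<longrightarrow> layer Z S T0 l \<inter> layer Z S T0 l' = {}) \<and>
     (\<Union>l<L. layer Z S T0 l) = {..<M*Z}"

definition stack_weight :: "(nat \<Rightarrow> nat \<Rightarrow> bool) \<Rightarrow> nat \<Rightarrow> nat \<Rightarrow> nat set \<Rightarrow> nat \<Rightarrow> nat \<Rightarrow> nat" where
  "stack_weight H Z S T0 l c = (\<Sum>j<l. card {r \<in> layer Z S T0 j. H r c})"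

definition layer_distance ::
  "(nat \<Rightarrow> nat \<Rightarrow> bool) \<Rightarrow> nat \<Rightarrow> nat \<Rightarrow> nat \<Rightarrow> nat \<Rightarrow> nat set \<Rightarrow> nat" where
  "layer_distance H N Z L S T0 =
     Max {l. l < L \<and> (\<forall>c < N*Z. stack_weight H Z S T0 l c \<le> 1)}"

end

theory Submission
  imports Defs
begin

text \<open>Shifting by S maps the layer T_l onto T_(l+1); as the shifts are bijections and
  T_0, ..., T_(L-1) partition the rows, this forces T_L = T_0, so layer indices live modulo L.
  Every shift fixes each block row of Z indices, so the layers cut a block row into L pieces
  of equal size and L divides Z. For the bound, let d be the layer distance and count the pairs
  (r, j), j < L, such that row r has a one in column c and its shift by j S lies in the first
  d layers: each such row occurs for exactly d values of j, while by the circulant structure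
  each j occurs for at most one row, as the first d layers meet the shifted column at most once.
  Hence d \<omega>(H) \<le> L, and L is one of the divisors over which L_LB is the minimum.\<close>

lemma pi_shift_0 [simp]: "pi_shift Z 0 i = i"
  by (simp add: pi_shift_def)

lemma div_pi_shift [simp]: "pi_shift Z s i div Z = i div Z"
  by (cases "Z = 0") (simp_all add: pi_shift_def)

lemma mod_pi_shift [simp]: "pi_shift Z s i mod Z = (i + s) mod Z"
  by (simp add: pi_shift_def)

lemma pi_shift_pi_shift: "pi_shift Z a (pi_shift Z b i) = pi_shift Z (a + b) i"
proof -
  have "(pi_shift Z b i + a) mod Z = (i + (a + b)) mod Z"
    by (metis mod_add_left_eq mod_pi_shift add.assoc add.commute)
  then show ?thesis
    by (metis div_pi_shift pi_shift_def)
qed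

lemma inj_pi_shift: "inj (pi_shift Z s)"
proof (rule injI)
  fix x y assume eq: "pi_shift Z s x = pi_shift Z s y"
  then have "x div Z = y div Z"
    by (metis div_pi_shift)
  moreover have "x mod Z = y mod Z"
    using arg_cong[OF eq, of "\<lambda>i. i mod Z"] by (simp add: nat_mod_eq_iff)
  ultimately show "x = y"
    by (metis div_mult_mod_eq)
qed

lemma pi_shift_less_mult_iff: "0 < Z \<Longrightarrow> pi_shift Z s i < M * Z \<longleftrightarrow> i < M * Z"
  by (metis div_less_iff_less_mult div_pi_shift)

lemma pi_shift_less_mult: "i < M * Z \<Longrightarrow> pi_shift Z s i < M * Z"
  by (cases "Z = 0") (simp_all add: pi_shift_less_mult_iff)

lemma qc_matrix_pi_shift:
  assumes "qc_matrix M N Z H" and "r < M * Z" and "c < N * Z"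
  shows "H (pi_shift Z s r) (pi_shift Z s c) = H r c"
proof (induction s)
  case (Suc s)
  have "pi_shift Z s r < M * Z" and "pi_shift Z s c < N * Z"
    using assms(2,3) by (simp_all add: pi_shift_less_mult)
  then have "H (pi_shift Z 1 (pi_shift Z s r)) (pi_shift Z 1 (pi_shift Z s c))
      = H (pi_shift Z s r) (pi_shift Z s c)"
    using assms(1) unfolding qc_matrix_def by auto
  then show ?case
    using Suc by (simp add: pi_shift_pi_shift)
qed simp

lemma card_mod_add_less:
  fixes L :: nat
  assumes "d \<le> L"
  shows "card {j. j < L \<and> (m + j) mod L < d} = d"
proof -
  let ?f = "\<lambda>j. (m + j) mod L"
  have "inj_on ?f {..<L}"
  proof (rule inj_onI)
    fix x y assume "x \<in> {..<L}" "y \<in> {..<L}" "?f x = ?f y"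
    moreover from \<open>?f x = ?f y\<close> have "x mod L = y mod L"
      using nat_mod_eq_iff by auto
    ultimately show "x = y"
      by simp
  qed
  moreover from this have "?f ` {..<L} = {..<L}"
    by (intro endo_inj_surj) auto
  ultimately have "?f ` {j. j < L \<and> ?f j < d} = {..<d}"
  proof (intro equalityI subsetI)
    fix x assume "x \<in> {..<d}"
    then have "x \<in> ?f ` {..<L}"
      using \<open>?f ` {..<L} = {..<L}\<close> assms by auto
    with \<open>x \<in> {..<d}\<close> show "x \<in> ?f ` {j. j < L \<and> ?f j < d}"
      by auto
  qed auto
  moreover have "inj_on ?f {j. j < L \<and> ?f j < d}"
    by (rule inj_on_subset[OF \<open>inj_on ?f {..<L}\<close>]) auto
  ultimately show ?thesis
    by (metis card_image card_lessThan)
qed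

lemma layer_0 [simp]: "layer Z S T0 0 = T0"
  by (simp add: layer_def)

lemma image_layer: "pi_shift Z (j * S) ` layer Z S T0 l = layer Z S T0 (l + j)"
  by (simp add: layer_def image_image pi_shift_pi_shift add_mult_distrib add.commute)

lemma layer_add_Int:
  "layer Z S T0 (l + j) \<inter> layer Z S T0 (l' + j)
     = pi_shift Z (j * S) ` (layer Z S T0 l \<inter> layer Z S T0 l')"
  by (simp add: image_layer[symmetric] image_Int inj_pi_shift)

lemma card_layer: "card (layer Z S T0 l) = card T0"
  unfolding layer_def by (rule card_image[OF inj_on_subset[OF inj_pi_shift subset_UNIV]])

lemma card_Collect_layers_le_stack_weight:
  "card {r \<in> (\<Union>i<d. layer Z S T0 i). H r c} \<le> stack_weight H Z S T0 d c"
proof -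
  have "{r \<in> (\<Union>i<d. layer Z S T0 i). H r c} = (\<Union>i<d. {r \<in> layer Z S T0 i. H r c})"
    by auto
  then show ?thesis
    unfolding stack_weight_def by (simp add: card_UN_le)
qed

lemma layer_distance_stack_weight:
  assumes "0 < L"
  shows "layer_distance H N Z L S T0 < L"
    and "\<forall>c < N * Z. stack_weight H Z S T0 (layer_distance H N Z L S T0) c \<le> 1"
proof -
  let ?D = "{l. l < L \<and> (\<forall>c < N * Z. stack_weight H Z S T0 l c \<le> 1)}"
  have "0 \<in> ?D"
    using assms by (simp add: stack_weight_def)
  then have "Max ?D \<in> ?D"
    by (intro Max_in) auto
  then show "layer_distance H N Z L S T0 < L"
    and "\<forall>c < N * Z. stack_weight H Z S T0 (layer_distance H N Z L S T0) c \<le> 1"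
    unfolding layer_distance_def by auto
qed

lemma mult_omega_le:
  assumes "\<And>c. c < n \<Longrightarrow> k * card {r \<in> A. H r c} \<le> B"
  shows "k * omega H A n \<le> B"
proof -
  have "omega H A n \<in> {0} \<union> (\<lambda>c. card {r \<in> A. H r c}) ` {..<n}"
    unfolding omega_def by (intro Max_in) auto
  then show ?thesis
    using assms by auto
qed

locale feasible_solution =
  fixes M Z L S :: nat and T0 :: "nat set"
  assumes feasible: "feasible M Z L S T0"
begin

abbreviation T :: "nat \<Rightarrow> nat set" where
  "T \<equiv> layer Z S T0"

lemma disjoint_layers: "l < L \<Longrightarrow> l' < L \<Longrightarrow> l \<noteq> l' \<Longrightarrow> T l \<inter> T l' = {}"
  using feasible unfolding feasible_def by blast

lemma UN_layers: "(\<Union>l<L. T l) = {..<M * Z}"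
  using feasible unfolding feasible_def by blast

lemma layer_subset: "T l \<subseteq> {..<M * Z}"
  using feasible unfolding feasible_def layer_def by (auto simp: pi_shift_less_mult)

lemma finite_layer: "finite (T l)"
  using layer_subset by (rule finite_subset) simp

lemma mem_layers_below_iff:
  assumes "x \<in> T a" and "a < L" and "d \<le> L"
  shows "x \<in> (\<Union>i<d. T i) \<longleftrightarrow> a < d"
proof
  assume "x \<in> (\<Union>i<d. T i)"
  then obtain i where "i < d" and "x \<in> T i"
    by auto
  with assms disjoint_layers[of i a] show "a < d"
    by (cases "i = a") auto
qed (use assms(1) in auto)

lemma layer_period: "T L = T 0"
proof (cases L)
  case (Suc n)
  have disjoint_L: "T L \<inter> T l = {}" if "0 < l" and "l < L" for l
  proof -
    have "T n \<inter> T (l - 1) = {}"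
      using that Suc by (intro disjoint_layers) auto
    then have "T (n + 1) \<inter> T (l - 1 + 1) = {}"
      by (simp only: layer_add_Int image_empty)
    moreover have "n + 1 = L" and "l - 1 + 1 = l"
      using that Suc by auto
    ultimately show ?thesis
      by simp
  qed
  have "T L \<subseteq> T 0"
  proof
    fix x assume "x \<in> T L"
    then have "x \<in> (\<Union>l<L. T l)"
      using layer_subset[of L] by (auto simp only: UN_layers)
    then obtain l where "l < L" and "x \<in> T l"
      by blast
    with \<open>x \<in> T L\<close> disjoint_L[of l] show "x \<in> T 0"
      by (cases "l = 0") auto
  qed
  moreover have "card (T L) = card (T 0)"
    by (simp only: card_layer)
  ultimately show ?thesis
    by (metis card_subset_eq finite_layer)
qed simp

lemma layer_add_mult_period: "T (l + q * L) = T l"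
proof (induction q)
  case (Suc q)
  have "T (l + Suc q * L) = pi_shift Z ((l + q * L) * S) ` T L"
    by (simp add: image_layer add.commute add.left_commute)
  also have "\<dots> = T (l + q * L)"
    using image_layer[of Z "l + q * L" S T0 0] by (simp add: layer_period)
  finally show ?case
    using Suc by simp
qed simp

lemma layer_mod: "T l = T (l mod L)"
  using layer_add_mult_period[of "l mod L" "l div L"] by simp

lemma L_dvd_Z:
  assumes "0 < M"
  shows "L dvd Z"
proof (cases "Z = 0")
  case False
  let ?B = "{..<Z}"
  have "T l \<inter> ?B = pi_shift Z (l * S) ` (T0 \<inter> ?B)" for l
    using pi_shift_less_mult_iff[of Z _ _ 1] False unfolding layer_def by auto
  then have card_block: "card (T l \<inter> ?B) = card (T0 \<inter> ?B)" for l
    by (simp add: card_image inj_on_subset[OF inj_pi_shift])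
  have "Z \<le> M * Z"
    using assms by simp
  then have "?B \<subseteq> {..<M * Z}"
    by auto
  then have "?B = (\<Union>l<L. T l) \<inter> ?B"
    by (simp only: UN_layers Int_absorb1)
  also have "\<dots> = (\<Union>l<L. T l \<inter> ?B)"
    by blast
  also have "card \<dots> = (\<Sum>l<L. card (T l \<inter> ?B))"
    by (intro card_UN_disjoint) (use disjoint_layers in \<open>auto simp: finite_layer\<close>)
  finally have "card ?B = (\<Sum>l<L. card (T l \<inter> ?B))" .
  then have "Z = L * card (T0 \<inter> ?B)"
    by (simp add: card_block)
  then show ?thesis
    by (rule dvdI)
qed simp

lemma card_shifts_into_layers_below:
  assumes "r < M * Z" and "d \<le> L"
  shows "card {j. j < L \<and> pi_shift Z (j * S) r \<in> (\<Union>i<d. T i)} = d"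
proof -
  obtain m where m: "m < L" "r \<in> T m"
    using assms(1) UN_layers by auto
  have "pi_shift Z (j * S) r \<in> T ((m + j) mod L)" for j
  proof -
    have "pi_shift Z (j * S) r \<in> T (m + j)"
      using image_layer[of Z j S T0 m] m(2) by blast
    moreover have "T (m + j) = T ((m + j) mod L)"
      by (rule layer_mod)
    ultimately show ?thesis
      by simp
  qed
  moreover have "(m + j) mod L < L" for j
    using m(1) by simp
  ultimately have "pi_shift Z (j * S) r \<in> (\<Union>i<d. T i) \<longleftrightarrow> (m + j) mod L < d" for j
    using mem_layers_below_iff assms(2) by blast
  then show ?thesis
    using card_mod_add_less[OF assms(2)] by simp
qed

lemma card_column_shifted_into_layers_below:
  assumes qc: "qc_matrix M N Z H" and c: "c < N * Z"
    and weight: "stack_weight H Z S T0 d (pi_shift Z (j * S) c) \<le> 1"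
  shows "card {r \<in> {..<M * Z}. H r c \<and> pi_shift Z (j * S) r \<in> (\<Union>i<d. T i)} \<le> 1"
proof -
  let ?f = "pi_shift Z (j * S)"
  let ?R = "{r \<in> {..<M * Z}. H r c \<and> ?f r \<in> (\<Union>i<d. T i)}"
  have "?f ` ?R \<subseteq> {x \<in> (\<Union>i<d. T i). H x (?f c)}"
    using qc_matrix_pi_shift[OF qc _ c] by auto
  then have "card ?R \<le> card {x \<in> (\<Union>i<d. T i). H x (?f c)}"
    by (intro card_inj_on_le[OF inj_on_subset[OF inj_pi_shift subset_UNIV]])
      (auto simp: finite_layer)
  also have "\<dots> \<le> stack_weight H Z S T0 d (?f c)"
    by (rule card_Collect_layers_le_stack_weight)
  finally show ?thesis
    using weight by simp
qed

lemma column_weight_bound: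
  assumes qc: "qc_matrix M N Z H" and "d \<le> L"
    and weight: "\<forall>c < N * Z. stack_weight H Z S T0 d c \<le> 1" and c: "c < N * Z"
  shows "d * card {r \<in> {..<M * Z}. H r c} \<le> L"
proof -
  define R where "R = {r \<in> {..<M * Z}. H r c}"
  define P where "P j r \<longleftrightarrow> pi_shift Z (j * S) r \<in> (\<Union>i<d. T i)" for j r
  have "d * card R = (\<Sum>r\<in>R. card {j. j < L \<and> P j r})"
    using card_shifts_into_layers_below \<open>d \<le> L\<close> by (simp add: R_def P_def)
  also have "\<dots> = (\<Sum>r\<in>R. \<Sum>j<L. of_bool (P j r))"
    by (simp add: lessThan_def Collect_conj_eq)
  also have "\<dots> = (\<Sum>j<L. \<Sum>r\<in>R. of_bool (P j r))"
    by (rule sum.swap)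
  also have "\<dots> = (\<Sum>j<L. card {r \<in> R. P j r})"
    by (simp add: R_def Collect_conj_eq Int_assoc)
  also have "\<dots> \<le> (\<Sum>j<L. 1)"
    using card_column_shifted_into_layers_below[OF qc c] weight pi_shift_less_mult[OF c]
    by (intro sum_mono) (simp add: R_def P_def conj_assoc)
  finally show ?thesis
    by (simp add: R_def)
qed

lemma mult_omega_le_num_layers:
  assumes "qc_matrix M N Z H" and "0 < L" and "k \<le> layer_distance H N Z L S T0"
  shows "k * omega H {..<M * Z} (N * Z) \<le> L"
proof (rule mult_omega_le)
  let ?d = "layer_distance H N Z L S T0"
  fix c assume "c < N * Z"
  have "?d \<le> L"
    using layer_distance_stack_weight(1)[OF assms(2)] by (rule less_imp_le)
  moreover have "\<forall>c < N * Z. stack_weight H Z S T0 ?d c \<le> 1"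
    by (rule layer_distance_stack_weight(2)[OF assms(2)])
  ultimately have "?d * card {r \<in> {..<M * Z}. H r c} \<le> L"
    using assms(1) \<open>c < N * Z\<close> by (intro column_weight_bound)
  with assms(3) show "k * card {r \<in> {..<M * Z}. H r c} \<le> L"
    by (meson le_trans mult_le_mono1)
qed

end

theorem corollary1:
  fixes M N Z L k S :: nat and H :: "nat \<Rightarrow> nat \<Rightarrow> bool" and T0 :: "nat set"
  assumes "M > 0" and "N > 0" and "Z > 0" and "L > 1" and "k > 0"
    and "qc_matrix M N Z H" and "no_zero_row M N Z H" and "distinct_rows M N Z H"
    and "feasible M Z L S T0"
    and "layer_distance H N Z L S T0 \<ge> k"
  shows "\<exists>LLB. LLB > 0 \<and> LLB dvd Z \<and> LLB \<ge> k * omega H {..<M*Z} (N*Z)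
           \<and> (\<forall>D. D > 0 \<and> D dvd Z \<and> D \<ge> k * omega H {..<M*Z} (N*Z) \<longrightarrow> LLB \<le> D)
           \<and> L \<ge> LLB"
proof -
  interpret feasible_solution M Z L S T0
    using assms(9) by unfold_locales
  define admissible where
    "admissible D \<longleftrightarrow> D > 0 \<and> D dvd Z \<and> D \<ge> k * omega H {..<M*Z} (N*Z)" for D
  have "admissible L"
    using assms(1,4,6,10) L_dvd_Z mult_omega_le_num_layers by (simp add: admissible_def)
  then have "admissible (LEAST D. admissible D)"
    by (rule LeastI)
  moreover have "\<forall>D. admissible D \<longrightarrow> (LEAST D. admissible D) \<le> D"
    by (simp add: Least_le)
  ultimately show ?thesis
    using \<open>admissible L\<close> unfolding admissible_def by blast
qed

end
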